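(* Let $\Lambda=\langle a_1\rangle\perp\cdots\perp\langle a_n\rangle=\mathcal{O}_Ds_1\perp\cdots\perp\mathcal{O}_Ds_n$ be a skew-hermitian lattice with $\nu(a_1)\le\cdots\le\nu(a_n)$, and assume $\mu(\Lambda)>\nu(4)$ and $N(a_2),\dots,N(a_n)\in N(a_1)k^{*2}$. Let $(s;\sigma)\in\mathcal{B}(\Lambda)$, i.e. $s=(1-r)s_m-s_0$ with $s_0=\lambda_{m+1}s_{m+1}+\cdots+\lambda_ns_n$ ($\lambda_l\in\mathcal{O}_D$), $\sigma=a_m(1-\bar r)$ and $|1-\bar r|\ge|2|$. If for some $t\in\{1,\dots,n-m\}$ we have $|\lambda_{m+t}|\ge|\lambda_{m+t+l}|$ for all $l\in\{1,\dots,n-m-t\}$, then there exists a lattice $\Lambda'=\langle b_1\rangle\perp\cdots\perp\langle b_{t+1}\rangle\subseteq\Lambda$ such that: (1) $(s;\sigma)\in\mathcal{U}^+_k(\Lambda')$; (2) $\mu(\Lambda')\ge\mu(\Lambda)$; (3) $N(b_i)\in N(a_1)k^{*2}$ for all $i=1,\dots,t+1$.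
   Context: $k$ is a dyadic local field of characteristic $0$ (finite extension of $\mathbb{Q}_2$), $\nu_k$ its normalized valuation, $|\cdot|_k$ its absolute value. $D$ is the quaternion division algebra over $k$ with canonical involution $q\mapsto\bar q$ and reduced norm $N$; $|q|:=|N(q)|_k$, $\nu(q):=\nu_k(N(q))$; $\mathcal{O}_D=\{q:|q|\le1\}$. A skew-hermitian space is a free $D$-module $V$ of finite rank with nondegenerate $h:V\times V\to D$, $D$-linear in the first variable, $h(x,y)=-\overline{h(y,x)}$. For pure quaternions $a_i$, $\langle a_1\rangle\perp\cdots\perp\langle a_n\rangle=\mathcal{O}_Ds_1\perp\cdots\perp\mathcal{O}_Ds_n$ means an orthogonal sum with $h(s_i,s_i)=a_i$; for such a lattice with $\nu(a_1)\le\cdots\le\nu(a_n)$, $\mu(\Lambda)=\min_i(\nu(a_{i+1})-\nu(a_i))$. For $s\in V$, $\sigma\in D^*$ with $\sigma-\bar\sigma=h(s,s)$, the simple rotation is $(s;\sigma)(x)=x-h(x,s)\sigma^{-1}s$; it is an isometry. $\mathcal{U}^+_k(\Lambda)$ is the group of isometries of $h$ with $\phi(\Lambda)=\Lambda$. $\mathcal{B}(\Lambda)$ is the set of simple rotations $(s;\sigma)\in\mathcal{U}^+_k(\Lambda)$ for which there exist $m\in\{1,\dots,n\}$, $r\in\mathcal{O}_D$ with $|1-r|\ge|2|$ and $\lambda_{m+1},\dots,\lambda_n\in\mathcal{O}_D$ with $s=(1-r)s_m-\sum_{l>m}\lambda_ls_l$ and $\sigma=a_m(1-\bar r)$. *)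

theory Defs
  imports Complex_Main "HOL-Library.Product_Plus" "HOL-Library.Function_Algebras"
begin

text \<open>k is a type of class field_char_0 equipped with a normalized discrete valuation
  v (values on nonzero elements; v 0 is irrelevant and never used).
  A finite extension of Q_2 is exactly a field of characteristic 0 that is complete for a
  normalized discrete valuation with finite residue field of characteristic 2.\<close>

definition val_ring :: "('k::field \<Rightarrow> int) \<Rightarrow> 'k set" where
  "val_ring v = {x. x = 0 \<or> 0 \<le> v x}"

definition residue_classes :: "('k::field \<Rightarrow> int) \<Rightarrow> 'k set set" where
  "residue_classes v =
     (\<lambda>x. {y \<in> val_ring v. x - y = 0 \<or> 1 \<le> v (x - y)}) ` val_ring v"

definition residue_card :: "('k::field \<Rightarrow> int) \<Rightarrow> nat" where
  "residue_card v = card (residue_classes v)"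

definition dyadic_local_field :: "('k::field_char_0 \<Rightarrow> int) \<Rightarrow> bool" where
  "dyadic_local_field v \<longleftrightarrow>
     (\<forall>x y. x \<noteq> 0 \<longrightarrow> y \<noteq> 0 \<longrightarrow> v (x * y) = v x + v y) \<and>
     (\<forall>x y. x \<noteq> 0 \<longrightarrow> y \<noteq> 0 \<longrightarrow> x + y \<noteq> 0 \<longrightarrow> min (v x) (v y) \<le> v (x + y)) \<and>
     (\<exists>\<pi>. \<pi> \<noteq> 0 \<and> v \<pi> = 1) \<and>
     0 < v 2 \<and>
     finite (residue_classes v) \<and>
     (\<forall>X :: nat \<Rightarrow> 'k.
        (\<forall>M. \<exists>N. \<forall>i\<ge>N. \<forall>j\<ge>N. X i = X j \<or> M \<le> v (X i - X j)) \<longrightarrow>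
        (\<exists>L. \<forall>M. \<exists>N. \<forall>i\<ge>N. X i = L \<or> M \<le> v (X i - L)))"

definition absk :: "('k::field \<Rightarrow> int) \<Rightarrow> 'k \<Rightarrow> real" where
  "absk v x = (if x = 0 then 0 else real (residue_card v) powi (- v x))"

text \<open>Elements (x0,x1,x2,x3) stand for x0 + x1 i + x2 j + x3 ij with i^2 = alpha,
  j^2 = beta, ij = - ji.  Addition is the componentwise one (Product_Plus).\<close>

type_synonym 'k quat = "'k \<times> 'k \<times> 'k \<times> 'k"

definition qk :: "'k::field \<Rightarrow> 'k quat" where
  "qk c = (c, 0, 0, 0)"

definition qmul :: "'k::field \<Rightarrow> 'k \<Rightarrow> 'k quat \<Rightarrow> 'k quat \<Rightarrow> 'k quat" where
  "qmul \<alpha> \<beta> p q = (case p of (a0, a1, a2, a3) \<Rightarrow> case q of (b0, b1, b2, b3) \<Rightarrow>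
     (a0*b0 + \<alpha>*a1*b1 + \<beta>*a2*b2 - \<alpha>*\<beta>*a3*b3,
      a0*b1 + a1*b0 - \<beta>*a2*b3 + \<beta>*a3*b2,
      a0*b2 + a2*b0 + \<alpha>*a1*b3 - \<alpha>*a3*b1,
      a0*b3 + a3*b0 + a1*b2 - a2*b1))"

definition qconj :: "'k::field quat \<Rightarrow> 'k quat" where
  "qconj q = (case q of (a0, a1, a2, a3) \<Rightarrow> (a0, - a1, - a2, - a3))"

definition qnorm :: "'k::field \<Rightarrow> 'k \<Rightarrow> 'k quat \<Rightarrow> 'k" where
  "qnorm \<alpha> \<beta> q = (case q of (a0, a1, a2, a3) \<Rightarrow>
     a0^2 - \<alpha>*a1^2 - \<beta>*a2^2 + \<alpha>*\<beta>*a3^2)"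

definition qinv :: "'k::field \<Rightarrow> 'k \<Rightarrow> 'k quat \<Rightarrow> 'k quat" where
  "qinv \<alpha> \<beta> q = qmul \<alpha> \<beta> (qk (inverse (qnorm \<alpha> \<beta> q))) (qconj q)"

definition pure_quat :: "'k::field quat \<Rightarrow> bool" where
  "pure_quat q \<longleftrightarrow> fst q = 0"

definition quat_division :: "'k::field \<Rightarrow> 'k \<Rightarrow> bool" where
  "quat_division \<alpha> \<beta> \<longleftrightarrow> \<alpha> \<noteq> 0 \<and> \<beta> \<noteq> 0 \<and> (\<forall>q. qnorm \<alpha> \<beta> q = 0 \<longrightarrow> q = 0)"

definition vD :: "'k::field \<Rightarrow> 'k \<Rightarrow> ('k \<Rightarrow> int) \<Rightarrow> 'k quat \<Rightarrow> int" where
  "vD \<alpha> \<beta> v q = v (qnorm \<alpha> \<beta> q)"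

definition absD :: "'k::field \<Rightarrow> 'k \<Rightarrow> ('k \<Rightarrow> int) \<Rightarrow> 'k quat \<Rightarrow> real" where
  "absD \<alpha> \<beta> v q = absk v (qnorm \<alpha> \<beta> q)"

definition OD :: "'k::field \<Rightarrow> 'k \<Rightarrow> ('k \<Rightarrow> int) \<Rightarrow> 'k quat set" where
  "OD \<alpha> \<beta> v = {q. absD \<alpha> \<beta> v q \<le> 1}"

text \<open>Vectors are functions nat \<Rightarrow> D supported on {1..n}; D acts on the left.
  s_i is the i-th unit vector, and h(x,y) = \<Sum> x_i a_i conj(y_i), so h(s_i,s_i) = a_i.\<close>

definition Vsp :: "nat \<Rightarrow> (nat \<Rightarrow> 'k::field quat) set" where
  "Vsp n = {x. \<forall>i. i \<notin> {1..n} \<longrightarrow> x i = 0}"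

definition unitv :: "nat \<Rightarrow> nat \<Rightarrow> 'k::field quat" where
  "unitv i = (\<lambda>j. if j = i then qk 1 else 0)"

definition vsmul :: "'k::field \<Rightarrow> 'k \<Rightarrow> 'k quat \<Rightarrow> (nat \<Rightarrow> 'k quat) \<Rightarrow> (nat \<Rightarrow> 'k quat)" where
  "vsmul \<alpha> \<beta> d x = (\<lambda>i. qmul \<alpha> \<beta> d (x i))"

definition hf :: "'k::field \<Rightarrow> 'k \<Rightarrow> nat \<Rightarrow> (nat \<Rightarrow> 'k quat) \<Rightarrow>
                  (nat \<Rightarrow> 'k quat) \<Rightarrow> (nat \<Rightarrow> 'k quat) \<Rightarrow> 'k quat" where
  "hf \<alpha> \<beta> n a x y = (\<Sum>i\<in>{1..n}. qmul \<alpha> \<beta> (qmul \<alpha> \<beta> (x i) (a i)) (qconj (y i)))"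

definition lat :: "'k::field \<Rightarrow> 'k \<Rightarrow> ('k \<Rightarrow> int) \<Rightarrow> (nat \<Rightarrow> nat \<Rightarrow> 'k quat) \<Rightarrow>
                   nat set \<Rightarrow> (nat \<Rightarrow> 'k quat) set" where
  "lat \<alpha> \<beta> v S I = {(\<Sum>i\<in>I. vsmul \<alpha> \<beta> (c i) (S i)) | c. \<forall>i\<in>I. c i \<in> OD \<alpha> \<beta> v}"

definition isometry :: "'k::field \<Rightarrow> 'k \<Rightarrow> nat \<Rightarrow> (nat \<Rightarrow> 'k quat) \<Rightarrow>
                        ((nat \<Rightarrow> 'k quat) \<Rightarrow> (nat \<Rightarrow> 'k quat)) \<Rightarrow> bool" where
  "isometry \<alpha> \<beta> n a \<phi> \<longleftrightarrow>
     bij_betw \<phi> (Vsp n) (Vsp n) \<and>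
     (\<forall>x\<in>Vsp n. \<forall>y\<in>Vsp n. \<phi> (x + y) = \<phi> x + \<phi> y) \<and>
     (\<forall>d. \<forall>x\<in>Vsp n. \<phi> (vsmul \<alpha> \<beta> d x) = vsmul \<alpha> \<beta> d (\<phi> x)) \<and>
     (\<forall>x\<in>Vsp n. \<forall>y\<in>Vsp n. hf \<alpha> \<beta> n a (\<phi> x) (\<phi> y) = hf \<alpha> \<beta> n a x y)"

definition Uplus :: "'k::field \<Rightarrow> 'k \<Rightarrow> nat \<Rightarrow> (nat \<Rightarrow> 'k quat) \<Rightarrow> (nat \<Rightarrow> 'k quat) set \<Rightarrow>
                     ((nat \<Rightarrow> 'k quat) \<Rightarrow> (nat \<Rightarrow> 'k quat)) set" where
  "Uplus \<alpha> \<beta> n a L = {\<phi>. isometry \<alpha> \<beta> n a \<phi> \<and> \<phi> ` L = L}"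

definition srot :: "'k::field \<Rightarrow> 'k \<Rightarrow> nat \<Rightarrow> (nat \<Rightarrow> 'k quat) \<Rightarrow> (nat \<Rightarrow> 'k quat) \<Rightarrow>
                    'k quat \<Rightarrow> (nat \<Rightarrow> 'k quat) \<Rightarrow> (nat \<Rightarrow> 'k quat)" where
  "srot \<alpha> \<beta> n a s \<sigma> x = x - vsmul \<alpha> \<beta> (qmul \<alpha> \<beta> (hf \<alpha> \<beta> n a x s) (qinv \<alpha> \<beta> \<sigma>)) s"

definition mu_list :: "int list \<Rightarrow> int" where
  "mu_list xs = (let ys = sort xs in Min {ys ! (i + 1) - ys ! i | i. i + 1 < length ys})"

end

theory Submission
  imports Defs
begin

text \<open>Put p = m + t and \<mu>_l = \<lambda>_p\<inverse> \<lambda>_l for l > p; maximality of |\<lambda>_p| puts every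
  \<mu>_l into O_D.  The vectors s_m, ..., s_{p-1} and w = s_p + \<Sum>_{l>p} \<mu>_l s_l are pairwise
  orthogonal and span the lattice \<Lambda> \<inter> W, where W is the D-subspace of vectors vanishing below m
  whose coordinates beyond p are x_p \<mu>_l.  As \<lambda>_l = \<lambda>_p \<mu>_l, the vector s lies in W, so the
  rotation (s;\<sigma>), which fixes \<Lambda>, also fixes \<Lambda> \<inter> W.  Finally h(w,w) = a_p (1 + \<epsilon>) with
  \<nu>(\<epsilon>) \<ge> \<mu>(\<Lambda>) > \<nu>(4), so by the local square theorem N(h(w,w)) is N(a_p) times a unit square:
  the new Gram entries have the valuations of a_m, ..., a_p and the norm class of a_1.\<close>

section \<open>Quaternion arithmetic\<close>

lemma qmul_assoc: "qmul al be (qmul al be x y) z = qmul al be x (qmul al be y z)"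
  by (cases x; cases y; cases z) (simp add: qmul_def algebra_simps)

lemma qmul_add_right: "qmul al be x (y + z) = qmul al be x y + qmul al be x z"
  by (cases x; cases y; cases z) (simp add: qmul_def algebra_simps)

lemma qmul_add_left: "qmul al be (x + y) z = qmul al be x z + qmul al be y z"
  by (cases x; cases y; cases z) (simp add: qmul_def algebra_simps)

lemma qmul_minus_left: "qmul al be (- x) z = - qmul al be x z"
  by (cases x; cases z) (simp add: qmul_def algebra_simps)

lemma qmul_zero_left [simp]: "qmul al be 0 z = 0"
  by (cases z) (simp add: qmul_def zero_prod_def)

lemma qmul_zero_right [simp]: "qmul al be z 0 = 0"
  by (cases z) (simp add: qmul_def zero_prod_def)

lemma qmul_one_left [simp]: "qmul al be (qk 1) z = z"
  by (cases z) (simp add: qmul_def qk_def)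

lemma qmul_one_right [simp]: "qmul al be z (qk 1) = z"
  by (cases z) (simp add: qmul_def qk_def)

lemma qmul_qk_qk: "qmul al be (qk c) (qk d) = qk (c * d)"
  by (simp add: qmul_def qk_def)

lemma qmul_qk_commute: "qmul al be x (qmul al be (qk c) y) = qmul al be (qk c) (qmul al be x y)"
  by (cases x; cases y) (simp add: qmul_def qk_def algebra_simps)

lemma qmul_conj_right: "qmul al be x (qconj x) = qk (qnorm al be x)"
  by (cases x) (simp add: qmul_def qconj_def qk_def qnorm_def power2_eq_square algebra_simps)

lemma qconj_zero [simp]: "qconj 0 = 0"
  by (simp add: qconj_def zero_prod_def)

lemma qconj_one [simp]: "qconj (qk 1) = qk 1"
  by (simp add: qconj_def qk_def)

lemma qnorm_zero [simp]: "qnorm al be 0 = 0"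
  by (simp add: qnorm_def zero_prod_def)

lemma qnorm_qk: "qnorm al be (qk c) = c\<^sup>2"
  by (simp add: qnorm_def qk_def)

lemma qnorm_mult: "qnorm al be (qmul al be x y) = qnorm al be x * qnorm al be y"
  by (cases x; cases y) (simp add: qmul_def qnorm_def power2_eq_square algebra_simps)

lemma qnorm_conj: "qnorm al be (qconj x) = qnorm al be x"
  by (cases x) (simp add: qconj_def qnorm_def)

lemma qnorm_add:
  "qnorm al be (x + y) = qnorm al be x + qnorm al be y + 2 * fst (qmul al be x (qconj y))"
  by (cases x; cases y) (simp add: qmul_def qnorm_def qconj_def power2_eq_square algebra_simps)

lemma qnorm_one_plus: "qnorm al be (qk 1 + x) = 1 + 2 * fst x + qnorm al be x"
  by (cases x) (simp add: qnorm_def qk_def power2_eq_square algebra_simps)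

lemma qnorm_inv: "qnorm al be (qinv al be x) = inverse (qnorm al be x)"
  by (cases "qnorm al be x = 0") (simp_all add: qinv_def qnorm_mult qnorm_qk qnorm_conj power2_eq_square)

lemma qmul_inv_right: "qnorm al be x \<noteq> 0 \<Longrightarrow> qmul al be x (qinv al be x) = qk 1"
  by (simp add: qinv_def qmul_qk_commute qmul_conj_right qmul_qk_qk left_inverse)

lemma pure_quat_conj_sandwich:
  "pure_quat a \<Longrightarrow> pure_quat (qmul al be (qmul al be x a) (qconj x))"
  by (cases x; cases a) (simp add: pure_quat_def qmul_def qconj_def algebra_simps)

lemma qmul_char_poly_roots:
  assumes "r1 + r2 = 2 * fst x" and "r1 * r2 = qnorm al be x"
  shows "qmul al be (x - qk r1) (x - qk r2) = 0"
proof -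
  obtain x0 x1 x2 x3 where x: "x = (x0, x1, x2, x3)" by (cases x)
  have r2: "r2 = 2 * x0 - r1" using assms(1) x by (simp add: algebra_simps)
  have "r1 * (2 * x0 - r1) = x0\<^sup>2 - al * x1\<^sup>2 - be * x2\<^sup>2 + al * be * x3\<^sup>2"
    using assms(2) x r2 by (simp add: qnorm_def)
  then show ?thesis unfolding x r2
    by (simp add: qmul_def qk_def zero_prod_def algebra_simps power2_eq_square)
qed

section \<open>The dyadic valuation\<close>

text \<open>v 0 is unspecified, so 0 is treated as having valuation +\<infinity>.\<close>
definition val_ge :: "('k::field \<Rightarrow> int) \<Rightarrow> 'k \<Rightarrow> int \<Rightarrow> bool" where
  "val_ge v x M \<longleftrightarrow> x = 0 \<or> M \<le> v x"

locale dyadic_valuation =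
  fixes v :: "'k::field_char_0 \<Rightarrow> int"
  assumes dyadic: "dyadic_local_field v"
begin

lemma v_mult: "x \<noteq> 0 \<Longrightarrow> y \<noteq> 0 \<Longrightarrow> v (x * y) = v x + v y"
  using dyadic unfolding dyadic_local_field_def by blast

lemma v_add: "x \<noteq> 0 \<Longrightarrow> y \<noteq> 0 \<Longrightarrow> x + y \<noteq> 0 \<Longrightarrow> min (v x) (v y) \<le> v (x + y)"
  using dyadic unfolding dyadic_local_field_def by blast

lemma v_two_pos: "0 < v 2"
  using dyadic unfolding dyadic_local_field_def by blast

lemma v_one [simp]: "v 1 = 0"
  using v_mult[of 1 1] by simp

lemma v_minus [simp]: "v (- x) = v x"
proof (cases "x = 0")
  case False
  have "v (-1) = 0" using v_mult[of "-1" "-1"] by simp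
  then show ?thesis using False v_mult[of "-1" x] by simp
qed simp

lemma v_inverse: "x \<noteq> 0 \<Longrightarrow> v (inverse x) = - v x"
  using v_mult[of x "inverse x"] by simp

lemma v_divide: "x \<noteq> 0 \<Longrightarrow> y \<noteq> 0 \<Longrightarrow> v (x / y) = v x - v y"
  by (simp add: divide_inverse v_mult v_inverse)

lemma v_power2: "x \<noteq> 0 \<Longrightarrow> v (x\<^sup>2) = 2 * v x"
  by (simp add: power2_eq_square v_mult)

lemma v_four: "v 4 = 2 * v 2"
  using v_mult[of 2 2] by simp

lemma v_four_pos: "0 < v 4"
  using v_four v_two_pos by simp

lemma v_sixteen: "v 16 = 2 * v 4"
  using v_mult[of 4 4] by simp

lemma val_ge_zero [simp]: "val_ge v 0 M"
  by (simp add: val_ge_def)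

lemma val_ge_mono: "val_ge v x M \<Longrightarrow> N \<le> M \<Longrightarrow> val_ge v x N"
  by (auto simp: val_ge_def)

lemma val_ge_add: "val_ge v x M \<Longrightarrow> val_ge v y M \<Longrightarrow> val_ge v (x + y) M"
  unfolding val_ge_def using v_add[of x y] by (cases "x = 0"; cases "y = 0"; cases "x + y = 0") auto

lemma val_ge_minus [simp]: "val_ge v (- x) M = val_ge v x M"
  by (simp add: val_ge_def)

lemma val_ge_diff: "val_ge v x M \<Longrightarrow> val_ge v y M \<Longrightarrow> val_ge v (x - y) M"
  using val_ge_add[of x M "- y"] by simp

lemma val_ge_diff_commute: "val_ge v (x - y) M = val_ge v (y - x) M"
  using val_ge_minus[of "x - y" M] by simp

lemma val_ge_mult: "val_ge v x M \<Longrightarrow> val_ge v y N \<Longrightarrow> val_ge v (x * y) (M + N)"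
  unfolding val_ge_def by (cases "x = 0"; cases "y = 0") (auto simp: v_mult)

lemma val_ge_all_imp_zero: "(\<And>M. K \<le> M \<Longrightarrow> val_ge v x M) \<Longrightarrow> x = 0"
proof (rule ccontr)
  assume h: "\<And>M. K \<le> M \<Longrightarrow> val_ge v x M" and "x \<noteq> 0"
  have "val_ge v x (max K (v x + 1))" by (rule h) simp
  then have "max K (v x + 1) \<le> v x" using \<open>x \<noteq> 0\<close> by (simp add: val_ge_def)
  then show False by simp
qed

lemma v_one_minus: "val_ge v z 1 \<Longrightarrow> 1 - z \<noteq> 0 \<and> v (1 - z) = 0"
proof -
  assume z: "val_ge v z 1"
  have ne: "1 - z \<noteq> 0" using z by (auto simp: val_ge_def)
  moreover have "v (1 - z) = 0"
  proof (cases "z = 0")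
    case False
    have "0 \<le> v (1 - z)" using v_add[of 1 "- z"] z False ne by (auto simp: val_ge_def)
    moreover have "min (v (1 - z)) (v z) \<le> v ((1 - z) + z)" using v_add[of "1 - z" z] ne False by simp
    ultimately show ?thesis using z False by (auto simp: val_ge_def)
  qed simp
  ultimately show ?thesis ..
qed

lemma residue_card_ge_two: "2 \<le> residue_card v"
proof -
  let ?cl = "\<lambda>x. {y \<in> val_ring v. x - y = 0 \<or> 1 \<le> v (x - y)}"
  have fin: "finite (residue_classes v)" using dyadic unfolding dyadic_local_field_def by blast
  have r0: "(0::'k) \<in> val_ring v" and r1: "(1::'k) \<in> val_ring v" by (auto simp: val_ring_def)
  have "1 \<notin> ?cl 0" by simp
  moreover have "1 \<in> ?cl 1" using r1 by simp
  ultimately have ne: "?cl 0 \<noteq> ?cl 1" by blast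
  have "{?cl 0, ?cl 1} \<subseteq> residue_classes v"
    using r0 r1 unfolding residue_classes_def by blast
  then have "card {?cl 0, ?cl 1} \<le> card (residue_classes v)"
    by (rule card_mono[OF fin])
  then show ?thesis using ne by (simp add: residue_card_def)
qed

lemma residue_card_powi_le_iff:
  "real (residue_card v) powi a \<le> real (residue_card v) powi b \<longleftrightarrow> a \<le> b"
proof -
  have "1 < real (residue_card v)" using residue_card_ge_two by simp
  then show ?thesis
    by (meson linorder_not_le power_int_increasing power_int_strict_increasing less_imp_le)
qed

lemma absk_le_one_iff: "absk v x \<le> 1 \<longleftrightarrow> val_ge v x 0"
  using residue_card_powi_le_iff[of "- v x" 0] by (auto simp: absk_def val_ge_def)

lemma absk_le_imp_val_ge: "y \<noteq> 0 \<Longrightarrow> absk v x \<le> absk v y \<Longrightarrow> val_ge v x (v y)"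
  using residue_card_powi_le_iff[of "- v x" "- v y"] by (cases "x = 0") (auto simp: absk_def val_ge_def)

lemma absk_nonpos_imp_zero: "absk v x \<le> 0 \<Longrightarrow> x = 0"
proof (rule ccontr)
  assume "absk v x \<le> 0" and "x \<noteq> 0"
  moreover have "0 < real (residue_card v) powi (- v x)" using residue_card_ge_two by simp
  ultimately show False by (simp add: absk_def)
qed

lemma OD_iff_val_ge: "q \<in> OD al be v \<longleftrightarrow> val_ge v (qnorm al be q) 0"
  by (simp add: OD_def absD_def absk_le_one_iff)

lemma OD_mult: "p \<in> OD al be v \<Longrightarrow> q \<in> OD al be v \<Longrightarrow> qmul al be p q \<in> OD al be v"
  using val_ge_mult by (fastforce simp: OD_iff_val_ge qnorm_mult)

lemma val_ge_limit_exists: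
  assumes step: "\<And>k. val_ge v (f (Suc k) - f k) (int k + 1)"
  shows "\<exists>L. \<forall>i. val_ge v (f i - L) (int i + 1)"
proof -
  have tail: "val_ge v (f (i + d) - f i) (int i + 1)" for i d
  proof (induction d)
    case (Suc d)
    have "val_ge v (f (Suc (i + d)) - f (i + d)) (int i + 1)"
      using step[of "i + d"] by (rule val_ge_mono) simp
    from val_ge_add[OF this Suc] show ?case by simp
  qed simp
  have "\<forall>M. \<exists>N. \<forall>i\<ge>N. \<forall>j\<ge>N. f i = f j \<or> M \<le> v (f i - f j)"
  proof (intro allI exI impI)
    fix M :: int and i j assume "nat M \<le> i" "nat M \<le> j"
    then have "val_ge v (f (max i j) - f (min i j)) M"
      using tail[of "min i j" "max i j - min i j"] by (auto elim: val_ge_mono)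
    then have "val_ge v (f i - f j) M"
      by (cases "i \<le> j") (auto simp: max_def min_def val_ge_diff_commute)
    then show "f i = f j \<or> M \<le> v (f i - f j)" by (auto simp: val_ge_def)
  qed
  then obtain L where L: "\<forall>M. \<exists>N. \<forall>i\<ge>N. f i = L \<or> M \<le> v (f i - L)"
    using dyadic unfolding dyadic_local_field_def by blast
  have "val_ge v (f i - L) (int i + 1)" for i
  proof -
    obtain N where N: "\<forall>j\<ge>N. f j = L \<or> int i + 1 \<le> v (f j - L)" using L by blast
    then have "val_ge v (f (i + N) - L) (int i + 1)" by (simp add: val_ge_def)
    from val_ge_diff[OF this tail[of i N]]
    have "val_ge v ((f (i + N) - L) - (f (i + N) - f i)) (int i + 1)" .
    then show ?thesis by simp
  qed
  then show ?thesis by blast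
qed

text \<open>Hensel's lemma for y^2 - y + c, obtained as the limit of the iteration y \<mapsto> y^2 + c
  from 0, which contracts distances on the maximal ideal.\<close>
lemma exists_fixed_point_square_add:
  assumes c: "val_ge v c 1"
  shows "\<exists>y. val_ge v y 1 \<and> y = y\<^sup>2 + c"
proof -
  define f where "f = rec_nat 0 (\<lambda>_ y. y\<^sup>2 + c)"
  have f0: "f 0 = 0" and fS: "\<And>k. f (Suc k) = (f k)\<^sup>2 + c" by (simp_all add: f_def)
  have f_small: "val_ge v (f k) 1" for k
  proof (induction k)
    case (Suc k)
    have "val_ge v ((f k)\<^sup>2) 1"
      using val_ge_mult[OF Suc Suc] by (auto simp: power2_eq_square elim: val_ge_mono)
    then show ?case using c by (simp add: fS val_ge_add)
  qed (simp add: f0)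
  have sum_small: "val_ge v (f i + f j) 1" for i j
    using f_small by (simp add: val_ge_add)
  have "val_ge v (f (Suc k) - f k) (int k + 1)" for k
  proof (induction k)
    case 0 then show ?case using c by (simp add: f0 fS)
  next
    case (Suc k)
    have "f (Suc (Suc k)) - f (Suc k) = (f (Suc k) - f k) * (f (Suc k) + f k)"
      by (simp add: fS algebra_simps power2_eq_square)
    with val_ge_mult[OF Suc sum_small] show ?case by simp
  qed
  then obtain L where L: "\<And>i. val_ge v (f i - L) (int i + 1)"
    using val_ge_limit_exists by blast
  have L_small: "val_ge v L 1" using L[of 0] by (simp add: f0)
  have "L - (L\<^sup>2 + c) = 0"
  proof (rule val_ge_all_imp_zero[where K = 1])
    fix M :: int assume "1 \<le> M"
    define N where "N = nat M"
    have split: "L - (L\<^sup>2 + c) = (f N - L) * (f N + L) - (f (Suc N) - L)"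
      by (simp add: fS algebra_simps power2_eq_square)
    have "val_ge v ((f N - L) * (f N + L)) (int N + 1 + 1)"
      by (rule val_ge_mult[OF L[of N] val_ge_add[OF f_small L_small]])
    then have "val_ge v ((f N - L) * (f N + L)) M"
      by (rule val_ge_mono) (simp add: N_def)
    moreover have "val_ge v (f (Suc N) - L) M"
      using L[of "Suc N"] \<open>1 \<le> M\<close> by (auto simp: N_def elim: val_ge_mono)
    ultimately show "val_ge v (L - (L\<^sup>2 + c)) M" unfolding split by (rule val_ge_diff)
  qed
  then show ?thesis using L_small by auto
qed

lemma local_square_theorem:
  assumes u: "val_ge v (u - 1) (v 4 + 1)"
  shows "\<exists>X. X \<noteq> 0 \<and> v X = 0 \<and> X\<^sup>2 = u"
proof -
  define c where "c = (1 - u) / 4"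
  have "val_ge v c 1"
  proof (cases "u = 1")
    case False
    then have "v 4 + 1 \<le> v (1 - u)" using u val_ge_diff_commute[of u 1] by (auto simp: val_ge_def)
    then show ?thesis using False by (simp add: c_def val_ge_def v_divide)
  qed (simp add: c_def)
  then obtain y where y: "val_ge v y 1" "y = y\<^sup>2 + c"
    using exists_fixed_point_square_add by blast
  have "val_ge v 2 0" using v_two_pos by (simp add: val_ge_def)
  then have "val_ge v (2 * y) 1" using val_ge_mult[OF _ y(1)] by fastforce
  from v_one_minus[OF this] have unit: "1 - 2 * y \<noteq> 0" "v (1 - 2 * y) = 0" by simp_all
  have "(1 - 2 * y)\<^sup>2 = 1 - 4 * (y - y\<^sup>2)" by (simp add: power2_eq_square algebra_simps)
  also have "\<dots> = u" using y(2) by (simp add: c_def field_simps)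
  finally show ?thesis using unit by blast
qed

end

section \<open>Reduced norms over a dyadic field\<close>

locale quat_valuation = dyadic_valuation v for v :: "'k::field_char_0 \<Rightarrow> int" +
  fixes al be :: 'k
  assumes division: "quat_division al be"
begin

lemma qnorm_eq_0_iff [simp]: "qnorm al be x = 0 \<longleftrightarrow> x = 0"
proof
  assume "qnorm al be x = 0"
  then show "x = 0" using division unfolding quat_division_def by (cases x) blast
qed simp

text \<open>If v(N x) > 2 v(tr x), Hensel's lemma would split the reduced characteristic polynomial of
  x over k, and x would be a zero divisor.\<close>
lemma v_qnorm_le_twice_v_trace:
  assumes x: "x \<noteq> 0" and T: "2 * fst x \<noteq> 0"
  shows "v (qnorm al be x) \<le> 2 * v (2 * fst x)"
proof (rule ccontr)
  let ?T = "2 * fst x" and ?N = "qnorm al be x"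
  assume "\<not> ?thesis"
  then have lt: "2 * v ?T < v ?N" by simp
  define c where "c = ?N / ?T\<^sup>2"
  have "v c = v ?N - v (?T\<^sup>2)"
    unfolding c_def using x T by (intro v_divide) simp_all
  then have vc: "v c = v ?N - 2 * v ?T" using v_power2[OF T] by simp
  then have "val_ge v c 1" using lt by (simp add: val_ge_def)
  then obtain y where y: "y = y\<^sup>2 + c" using exists_fixed_point_square_add by blast
  have cy: "c = y - y\<^sup>2" using y by (simp add: algebra_simps)
  have "(?T * y) * (?T * (1 - y)) = ?T\<^sup>2 * c"
    by (simp add: cy power2_eq_square algebra_simps)
  also have "\<dots> = ?N" using T by (simp add: c_def)
  finally have "qmul al be (x - qk (?T * y)) (x - qk (?T * (1 - y))) = 0"
    by (intro qmul_char_poly_roots) (simp_all add: algebra_simps)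
  then have "qnorm al be (x - qk (?T * y)) * qnorm al be (x - qk (?T * (1 - y))) = 0"
    by (metis qnorm_mult qnorm_zero)
  then have "x = qk (?T * y) \<or> x = qk (?T * (1 - y))" by simp
  then have "fst x = ?T * y \<or> fst x = ?T * (1 - y)" by (metis fst_conv qk_def)
  then have "?T * (2 * y - 1) = 0" by (auto simp: algebra_simps)
  then have y_half: "y = 1/2" using T by (simp add: field_simps)
  have "c = 1/4" unfolding cy y_half by (simp add: power2_eq_square)
  then have "v c = - v 4" using v_divide[of 1 4] by (simp only:) simp
  with vc lt v_four_pos show False by simp
qed

lemma val_ge_trace: "val_ge v (qnorm al be x) M \<Longrightarrow> 2 * K \<le> M + 1 \<Longrightarrow> val_ge v (2 * fst x) K"
  using v_qnorm_le_twice_v_trace[of x]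
  by (cases "x = 0 \<or> 2 * fst x = 0") (auto simp: zero_prod_def val_ge_def)

lemma val_ge_qnorm_add:
  assumes "val_ge v (qnorm al be x) K" and "val_ge v (qnorm al be y) K"
  shows "val_ge v (qnorm al be (x + y)) K"
proof -
  have "val_ge v (qnorm al be (qmul al be x (qconj y))) (K + K)"
    using val_ge_mult[OF assms] by (simp add: qnorm_mult qnorm_conj)
  then have "val_ge v (2 * fst (qmul al be x (qconj y))) K"
    by (rule val_ge_trace) simp
  then show ?thesis using assms by (simp add: qnorm_add val_ge_add)
qed

lemma val_ge_qnorm_sum:
  "finite A \<Longrightarrow> (\<And>i. i \<in> A \<Longrightarrow> val_ge v (qnorm al be (f i)) K) \<Longrightarrow>
   val_ge v (qnorm al be (sum f A)) K"
  by (induction A rule: finite_induct) (auto intro: val_ge_qnorm_add)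

lemma qinv_mult_OD:
  assumes "absD al be v y \<le> absD al be v x"
  shows "qmul al be (qinv al be x) y \<in> OD al be v"
proof (cases "x = 0")
  case False
  moreover have "val_ge v (qnorm al be y) (v (qnorm al be x))"
    using assms False absk_le_imp_val_ge by (simp add: absD_def)
  ultimately have "val_ge v (inverse (qnorm al be x) * qnorm al be y) (- v (qnorm al be x) + v (qnorm al be x))"
    by (intro val_ge_mult) (simp_all add: val_ge_def v_inverse)
  then show ?thesis by (simp add: OD_iff_val_ge qnorm_mult qnorm_inv)
qed (simp add: qinv_def OD_iff_val_ge)

lemma qmul_qinv_mult_cancel:
  assumes "absD al be v y \<le> absD al be v x"
  shows "qmul al be x (qmul al be (qinv al be x) y) = y"
proof (cases "x = 0")
  case True
  then have "y = 0" using assms absk_nonpos_imp_zero[of "qnorm al be y"] by (simp add: absD_def absk_def)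
  then show ?thesis by simp
qed (simp add: qmul_assoc[symmetric] qmul_inv_right)

text \<open>Perturbing a by c with v(N c) - v(N a) > v(16) multiplies N(a) by a unit square:
  N(a + c) = N(a) N(1 + a\<inverse>c), and N(1 + \<epsilon>) \<equiv> 1 modulo 4\<pi>.\<close>
lemma qnorm_add_unit_square:
  assumes a: "a \<noteq> 0" and c: "val_ge v (qnorm al be c) (v (qnorm al be a) + M)"
    and M: "2 * v 4 < M"
  shows "\<exists>X. X \<noteq> 0 \<and> v X = 0 \<and> qnorm al be (a + c) = qnorm al be a * X\<^sup>2"
proof -
  define \<epsilon> where "\<epsilon> = qmul al be (qinv al be a) c"
  have "val_ge v (qnorm al be \<epsilon>) M"
  proof (cases "c = 0")
    case False
    have "v (qnorm al be \<epsilon>) = v (qnorm al be c) - v (qnorm al be a)"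
      using False a by (simp add: \<epsilon>_def qnorm_mult qnorm_inv v_mult v_inverse)
    then show ?thesis using c False by (simp add: val_ge_def)
  qed (simp add: \<epsilon>_def)
  then have "val_ge v (2 * fst \<epsilon>) (v 4 + 1)" and "val_ge v (qnorm al be \<epsilon>) (v 4 + 1)"
    using M v_four_pos by (auto intro: val_ge_trace elim: val_ge_mono)
  then have "val_ge v (qnorm al be (qk 1 + \<epsilon>) - 1) (v 4 + 1)"
    using val_ge_add by (simp add: qnorm_one_plus)
  then obtain X where X: "X \<noteq> 0" "v X = 0" "X\<^sup>2 = qnorm al be (qk 1 + \<epsilon>)"
    using local_square_theorem by blast
  have "a + c = qmul al be a (qk 1 + \<epsilon>)"
    using a by (simp add: \<epsilon>_def qmul_add_right qmul_assoc[symmetric] qmul_inv_right)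
  then show ?thesis using X by (intro exI[of _ X]) (simp add: qnorm_mult)
qed

end


section \<open>The invariant \<mu>\<close>

lemma mu_list_sorted:
  "sorted xs \<Longrightarrow> mu_list xs = Min {xs ! (i + 1) - xs ! i |i. i + 1 < length xs}"
  by (simp add: mu_list_def sorted_sort_id)

lemma finite_consecutive_diffs: "finite {f i |i. i + 1 < (L::nat)}"
  by (rule finite_subset[of _ "f ` {..<L}"]) auto

lemma sorted_map_upt:
  fixes g :: "nat \<Rightarrow> int"
  assumes "\<forall>i\<in>{1..<n}. g i \<le> g (Suc i)"
  shows "sorted (map g [1..<Suc n])"
  using assms unfolding sorted_iff_nth_Suc by (auto simp del: upt_Suc simp: nth_upt)

lemma mu_list_le_consecutive_diff:
  fixes g :: "nat \<Rightarrow> int"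
  assumes mono: "\<forall>i\<in>{1..<n}. g i \<le> g (Suc i)" and i: "1 \<le> i" "i < n"
  shows "mu_list (map g [1..<Suc n]) \<le> g (Suc i) - g i"
proof -
  let ?xs = "map g [1..<Suc n]"
  have "mu_list ?xs = Min {?xs ! (j + 1) - ?xs ! j |j. j + 1 < n}"
    using mu_list_sorted[OF sorted_map_upt[OF mono]] by simp
  also have "\<dots> \<le> ?xs ! (i - 1 + 1) - ?xs ! (i - 1)"
    by (rule Min_le[OF finite_consecutive_diffs]) (use i in \<open>auto intro!: exI[of _ "i - 1"]\<close>)
  also have "\<dots> = g (Suc i) - g i" using i by (simp del: upt_Suc add: nth_upt)
  finally show ?thesis .
qed

lemma mu_list_le_diff:
  fixes g :: "nat \<Rightarrow> int"
  assumes mono: "\<forall>i\<in>{1..<n}. g i \<le> g (Suc i)" and pos: "0 < mu_list (map g [1..<Suc n])"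
    and "1 \<le> p" "p < l" "l \<le> n"
  shows "mu_list (map g [1..<Suc n]) \<le> g l - g p"
  using assms(4,5)
proof (induction l)
  case (Suc l)
  have step: "mu_list (map g [1..<Suc n]) \<le> g (Suc l) - g l"
    by (rule mu_list_le_consecutive_diff[OF mono]) (use \<open>1 \<le> p\<close> Suc in auto)
  show ?case
  proof (cases "p < l")
    case True
    with Suc step pos show ?thesis by simp
  next
    case False
    then have "l = p" using Suc by simp
    with step show ?thesis by simp
  qed
qed simp

lemma mu_list_window_ge:
  fixes g :: "nat \<Rightarrow> int"
  assumes mono: "\<forall>i\<in>{1..<n}. g i \<le> g (Suc i)" and "1 \<le> m" "1 \<le> t" "m + t \<le> n"
  shows "mu_list (map g [1..<Suc n]) \<le> mu_list (map (\<lambda>i. g (m + i - 1)) [1..<t+2])"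
proof -
  let ?ys = "map (\<lambda>i. g (m + i - 1)) [1..<t+2]"
  have ys: "\<And>j. j < t + 1 \<Longrightarrow> ?ys ! j = g (m + j)" by (simp del: upt_Suc add: nth_upt)
  have "sorted ?ys" unfolding sorted_iff_nth_Suc using mono assms(2-4)
    by (auto simp del: upt_Suc simp: nth_upt)
  then have "mu_list ?ys = Min {?ys ! (j + 1) - ?ys ! j |j. j + 1 < t + 1}"
    by (simp add: mu_list_sorted)
  also have "mu_list (map g [1..<Suc n]) \<le> \<dots>"
  proof (rule Min.boundedI[OF finite_consecutive_diffs])
    show "{?ys ! (j + 1) - ?ys ! j |j. j + 1 < t + 1} \<noteq> {}" using \<open>1 \<le> t\<close> by (auto intro: exI[of _ 0])
  next
    fix d assume "d \<in> {?ys ! (j + 1) - ?ys ! j |j. j + 1 < t + 1}"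
    then obtain j where j: "j + 1 < t + 1" "d = g (Suc (m + j)) - g (m + j)"
      using ys by fastforce
    show "mu_list (map g [1..<Suc n]) \<le> d"
      unfolding j(2) by (rule mu_list_le_consecutive_diff[OF mono]) (use j assms(2-4) in auto)
  qed
  finally show ?thesis .
qed


section \<open>Lattices and simple rotations\<close>

lemma sum_apply: "(\<Sum>i\<in>A. (f i :: nat \<Rightarrow> 'a::comm_monoid_add)) j = (\<Sum>i\<in>A. f i j)"
  by (induction A rule: infinite_finite_induct) auto

lemma vsmul_apply [simp]: "vsmul al be d x i = qmul al be d (x i)"
  by (simp add: vsmul_def)

lemma unitv_combination_apply:
  assumes "finite I"
  shows "(\<Sum>i\<in>I. vsmul al be (c i) (unitv i)) j = (if j \<in> I then c j else 0)"
proof -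
  have "(\<Sum>i\<in>I. vsmul al be (c i) (unitv i)) j = (\<Sum>i\<in>I. if j = i then c j else 0)"
    unfolding sum_apply by (rule sum.cong) (auto simp: unitv_def)
  then show ?thesis using assms by simp
qed

lemma hf_eq_single_term:
  assumes "j \<in> {1..n}" and "\<forall>k\<in>{1..n}. k \<noteq> j \<longrightarrow> x k = 0 \<or> y k = 0"
  shows "hf al be n a x y = qmul al be (qmul al be (x j) (a j)) (qconj (y j))"
proof -
  have "hf al be n a x y =
      (\<Sum>k\<in>{1..n}. if j = k then qmul al be (qmul al be (x j) (a j)) (qconj (y j)) else 0)"
    unfolding hf_def by (rule sum.cong) (use assms(2) in auto)
  then show ?thesis using assms(1) by simp
qed

lemma hf_disjoint_supports: "\<forall>k. x k = 0 \<or> y k = 0 \<Longrightarrow> hf al be n a x y = 0"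
  unfolding hf_def by (rule sum.neutral) (metis (no_types) qconj_zero qmul_zero_left qmul_zero_right)

lemma hf_unitv: "j \<in> {1..n} \<Longrightarrow> hf al be n a (unitv j) (unitv j) = a j"
  by (subst hf_eq_single_term[of j]) (auto simp: unitv_def)

lemma lat_unitv_iff:
  "x \<in> lat al be v unitv {1..n} \<longleftrightarrow> x \<in> Vsp n \<and> (\<forall>j\<in>{1..n}. x j \<in> OD al be v)"
proof
  assume "x \<in> lat al be v unitv {1..n}"
  then obtain c where "\<forall>i\<in>{1..n}. c i \<in> OD al be v"
    and "x = (\<Sum>i\<in>{1..n}. vsmul al be (c i) (unitv i))"
    unfolding lat_def by blast
  then show "x \<in> Vsp n \<and> (\<forall>j\<in>{1..n}. x j \<in> OD al be v)"
    by (auto simp: Vsp_def unitv_combination_apply)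
next
  assume x: "x \<in> Vsp n \<and> (\<forall>j\<in>{1..n}. x j \<in> OD al be v)"
  have "x = (\<Sum>i\<in>{1..n}. vsmul al be (x i) (unitv i))"
  proof
    fix j show "x j = (\<Sum>i\<in>{1..n}. vsmul al be (x i) (unitv i)) j"
      using x by (simp add: unitv_combination_apply Vsp_def)
  qed
  then show "x \<in> lat al be v unitv {1..n}" using x unfolding lat_def by blast
qed

lemma srot_image_inter:
  assumes L: "srot al be n a s \<sigma> ` L = L" and s: "s \<in> W"
    and add: "\<And>x y. x \<in> W \<Longrightarrow> y \<in> W \<Longrightarrow> x + y \<in> W"
    and smul: "\<And>d x. x \<in> W \<Longrightarrow> vsmul al be d x \<in> W"
  shows "srot al be n a s \<sigma> ` (L \<inter> W) = L \<inter> W"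
proof -
  define c where "c = (\<lambda>x. qmul al be (hf al be n a x s) (qinv al be \<sigma>))"
  have rot: "srot al be n a s \<sigma> x = x + vsmul al be (- c x) s" for x
    by (simp add: srot_def c_def vsmul_def qmul_minus_left fun_eq_iff)
  have "x \<in> W \<longleftrightarrow> srot al be n a s \<sigma> x \<in> W" for x
  proof
    show "x \<in> W \<Longrightarrow> srot al be n a s \<sigma> x \<in> W" unfolding rot by (intro add smul s)
  next
    assume "srot al be n a s \<sigma> x \<in> W"
    then have "srot al be n a s \<sigma> x + vsmul al be (c x) s \<in> W" by (intro add smul s)
    moreover have "srot al be n a s \<sigma> x + vsmul al be (c x) s = x"
      by (simp add: rot vsmul_def qmul_minus_left fun_eq_iff)
    ultimately show "x \<in> W" by simp
  qed
  then have "srot al be n a s \<sigma> ` (L \<inter> W) = srot al be n a s \<sigma> ` L \<inter> W"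
    by blast
  then show ?thesis using L by simp
qed

lemma srot_Uplus_inter:
  assumes "srot al be n a s \<sigma> \<in> Uplus al be n a L" and "s \<in> W"
    and "\<And>x y. x \<in> W \<Longrightarrow> y \<in> W \<Longrightarrow> x + y \<in> W"
    and "\<And>d x. x \<in> W \<Longrightarrow> vsmul al be d x \<in> W"
  shows "srot al be n a s \<sigma> \<in> Uplus al be n a (L \<inter> W)"
  using assms srot_image_inter[of al be n a s \<sigma> L W] by (simp add: Uplus_def)


section \<open>The adapted sublattice\<close>

definition tail_vec :: "nat \<Rightarrow> nat \<Rightarrow> (nat \<Rightarrow> 'k::field quat) \<Rightarrow> nat \<Rightarrow> 'k quat" where
  "tail_vec n p \<mu> = (\<lambda>j. if j = p then qk 1 else if p < j \<and> j \<le> n then \<mu> j else 0)"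

definition adapted_basis :: "nat \<Rightarrow> nat \<Rightarrow> nat \<Rightarrow> (nat \<Rightarrow> 'k::field quat) \<Rightarrow> nat \<Rightarrow> nat \<Rightarrow> 'k quat" where
  "adapted_basis n m t \<mu> i = (if i \<le> t then unitv (m + i - 1) else tail_vec n (m + t) \<mu>)"

definition adapted_subspace :: "'k::field \<Rightarrow> 'k \<Rightarrow> nat \<Rightarrow> nat \<Rightarrow> nat \<Rightarrow> (nat \<Rightarrow> 'k quat) \<Rightarrow>
    (nat \<Rightarrow> 'k quat) set" where
  "adapted_subspace al be n m p \<mu> =
     {x \<in> Vsp n. (\<forall>j<m. x j = 0) \<and> (\<forall>l. p < l \<and> l \<le> n \<longrightarrow> x l = qmul al be (x p) (\<mu> l))}"

lemma adapted_subspace_add: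
  "x \<in> adapted_subspace al be n m p \<mu> \<Longrightarrow> y \<in> adapted_subspace al be n m p \<mu> \<Longrightarrow>
   x + y \<in> adapted_subspace al be n m p \<mu>"
  by (auto simp: adapted_subspace_def Vsp_def qmul_add_left)

lemma adapted_subspace_vsmul:
  "x \<in> adapted_subspace al be n m p \<mu> \<Longrightarrow> vsmul al be d x \<in> adapted_subspace al be n m p \<mu>"
  by (auto simp: adapted_subspace_def Vsp_def qmul_assoc)

lemma adapted_basis_in_Vsp:
  "1 \<le> m \<Longrightarrow> m + t \<le> n \<Longrightarrow> i \<in> {1..t+1} \<Longrightarrow> adapted_basis n m t \<mu> i \<in> Vsp n"
  by (auto simp: adapted_basis_def tail_vec_def unitv_def Vsp_def)

lemma hf_adapted_basis_orthogonal:
  assumes "1 \<le> m" "i \<in> {1..t+1}" "j \<in> {1..t+1}" "i \<noteq> j"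
  shows "hf al be n a (adapted_basis n m t \<mu> i) (adapted_basis n m t \<mu> j) = 0"
  using assms by (intro hf_disjoint_supports) (auto simp: adapted_basis_def tail_vec_def unitv_def)

lemma hf_tail_vec:
  assumes "p \<in> {1..n}"
  shows "hf al be n a (tail_vec n p \<mu>) (tail_vec n p \<mu>) =
    a p + (\<Sum>l\<in>{Suc p..n}. qmul al be (qmul al be (\<mu> l) (a l)) (qconj (\<mu> l)))"
proof -
  let ?F = "\<lambda>k. qmul al be (qmul al be (tail_vec n p \<mu> k) (a k)) (qconj (tail_vec n p \<mu> k))"
  have "hf al be n a (tail_vec n p \<mu>) (tail_vec n p \<mu>) = sum ?F {p..n}"
    unfolding hf_def by (rule sum.mono_neutral_right) (use assms in \<open>auto simp: tail_vec_def\<close>)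
  also have "\<dots> = ?F p + sum ?F {Suc p..n}" using assms by (simp add: sum.atLeast_Suc_atMost)
  also have "sum ?F {Suc p..n} = (\<Sum>l\<in>{Suc p..n}. qmul al be (qmul al be (\<mu> l) (a l)) (qconj (\<mu> l)))"
    by (rule sum.cong) (auto simp: tail_vec_def)
  finally show ?thesis by (simp add: tail_vec_def)
qed

lemma adapted_basis_combination_apply:
  assumes "1 \<le> m"
  shows "(\<Sum>i\<in>{1..t+1}. vsmul al be (c i) (adapted_basis n m t \<mu> i)) j =
    (if j < m then 0 else if j < m + t then c (j + 1 - m) else if j = m + t then c (t + 1)
     else if j \<le> n then qmul al be (c (t + 1)) (\<mu> j) else 0)"
proof -
  have "(\<Sum>i\<in>{1..t}. qmul al be (c i) (adapted_basis n m t \<mu> i j)) =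
      (\<Sum>i\<in>{1..t}. if i = j + 1 - m then (if m \<le> j then c i else 0) else 0)"
    by (rule sum.cong) (auto simp: adapted_basis_def unitv_def)
  also have "\<dots> = (if m \<le> j \<and> j < m + t then c (j + 1 - m) else 0)"
    using assms by (auto simp: sum.delta)
  finally show ?thesis
    using assms by (simp add: sum_apply sum.cl_ivl_Suc adapted_basis_def tail_vec_def)
qed

lemma rotation_vector_in_adapted_subspace:
  assumes "1 \<le> m" "m < p" "p \<le> n"
    and lam: "\<forall>l. p < l \<and> l \<le> n \<longrightarrow> qmul al be (lam p) (\<mu> l) = lam l"
  shows "vsmul al be (qk 1 - r) (unitv m) - (\<Sum>l\<in>{m+1..n}. vsmul al be (lam l) (unitv l))
    \<in> adapted_subspace al be n m p \<mu>"
proof -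
  let ?s = "vsmul al be (qk 1 - r) (unitv m) - (\<Sum>l\<in>{m+1..n}. vsmul al be (lam l) (unitv l))"
  have s: "?s j = (if j = m then qk 1 - r else 0) - (if j \<in> {m+1..n} then lam j else 0)" for j
    using unitv_combination_apply[of "{m+1..n}" al be lam j] by (simp add: unitv_def)
  have "?s \<in> Vsp n" unfolding Vsp_def s using assms(1-3) by auto
  moreover have "\<forall>j<m. ?s j = 0" unfolding s by simp
  moreover have "?s l = qmul al be (?s p) (\<mu> l)" if "p < l \<and> l \<le> n" for l
    unfolding s using that assms(2) lam by (simp add: qmul_minus_left)
  ultimately show ?thesis by (simp add: adapted_subspace_def)
qed


context dyadic_valuation
begin

lemma lat_adapted_basis_subset:
  assumes "1 \<le> m" and "m + t \<le> n" and \<mu>: "\<forall>l. m + t < l \<and> l \<le> n \<longrightarrow> \<mu> l \<in> OD al be v"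
  shows "lat al be v (adapted_basis n m t \<mu>) {1..t+1} \<subseteq>
    lat al be v unitv {1..n} \<inter> adapted_subspace al be n m (m + t) \<mu>"
proof
  fix x assume "x \<in> lat al be v (adapted_basis n m t \<mu>) {1..t+1}"
  then obtain c where c: "\<forall>i\<in>{1..t+1}. c i \<in> OD al be v"
    and x_sum: "x = (\<Sum>i\<in>{1..t+1}. vsmul al be (c i) (adapted_basis n m t \<mu> i))"
    unfolding lat_def by blast
  have x: "x j = (if j < m then 0 else if j < m + t then c (j + 1 - m)
      else if j = m + t then c (t + 1) else if j \<le> n then qmul al be (c (t + 1)) (\<mu> j) else 0)" for j
    unfolding x_sum by (rule adapted_basis_combination_apply[OF assms(1)])
  have V: "x \<in> Vsp n" using assms(1,2) by (auto simp: Vsp_def x)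
  moreover have "x j \<in> OD al be v" if "j \<in> {1..n}" for j
  proof -
    have "0 \<in> OD al be v" by (simp add: OD_iff_val_ge)
    moreover have "c i \<in> OD al be v" if "1 \<le> i" "i \<le> t + 1" for i using c that by simp
    ultimately show ?thesis using \<mu> that OD_mult by (auto simp: x)
  qed
  ultimately have "x \<in> lat al be v unitv {1..n}" using lat_unitv_iff by blast
  moreover have "x \<in> adapted_subspace al be n m (m + t) \<mu>"
    using V by (simp add: adapted_subspace_def x)
  ultimately show "x \<in> lat al be v unitv {1..n} \<inter> adapted_subspace al be n m (m + t) \<mu>" ..
qed

lemma adapted_subspace_subset_lat:
  assumes "1 \<le> m" and "m + t \<le> n"
  shows "lat al be v unitv {1..n} \<inter> adapted_subspace al be n m (m + t) \<mu> \<subseteq>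
    lat al be v (adapted_basis n m t \<mu>) {1..t+1}"
proof
  fix x assume x: "x \<in> lat al be v unitv {1..n} \<inter> adapted_subspace al be n m (m + t) \<mu>"
  define c where "c = (\<lambda>i. x (m + i - 1))"
  have "c i \<in> OD al be v" if "i \<in> {1..t+1}" for i
  proof -
    have "\<forall>j\<in>{1..n}. x j \<in> OD al be v" using x lat_unitv_iff by blast
    moreover have "m + i - 1 \<in> {1..n}" using that assms by auto
    ultimately show ?thesis by (simp add: c_def)
  qed
  moreover have "x = (\<Sum>i\<in>{1..t+1}. vsmul al be (c i) (adapted_basis n m t \<mu> i))"
  proof
    fix j
    show "x j = (\<Sum>i\<in>{1..t+1}. vsmul al be (c i) (adapted_basis n m t \<mu> i)) j"
      using x assms unfolding adapted_basis_combination_apply[OF assms(1)]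
      by (auto simp: c_def adapted_subspace_def Vsp_def)
  qed
  ultimately show "x \<in> lat al be v (adapted_basis n m t \<mu>) {1..t+1}"
    unfolding lat_def by blast
qed

lemma lat_adapted_basis:
  assumes "1 \<le> m" and "m + t \<le> n" and "\<forall>l. m + t < l \<and> l \<le> n \<longrightarrow> \<mu> l \<in> OD al be v"
  shows "lat al be v (adapted_basis n m t \<mu>) {1..t+1} =
    lat al be v unitv {1..n} \<inter> adapted_subspace al be n m (m + t) \<mu>"
  using lat_adapted_basis_subset[OF assms] adapted_subspace_subset_lat[OF assms(1,2)] by blast

end

context quat_valuation
begin

lemma hf_tail_vec_unit_square:
  assumes p: "p \<in> {1..n}" and ap: "a p \<noteq> 0" "pure_quat (a p)"
    and tail: "\<forall>l\<in>{Suc p..n}. pure_quat (a l) \<and> \<mu> l \<in> OD al be v \<and>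
      val_ge v (qnorm al be (a l)) (v (qnorm al be (a p)) + M)"
    and M: "2 * v 4 < M"
  shows "pure_quat (hf al be n a (tail_vec n p \<mu>) (tail_vec n p \<mu>)) \<and>
    (\<exists>X. X \<noteq> 0 \<and> v X = 0 \<and>
      qnorm al be (hf al be n a (tail_vec n p \<mu>) (tail_vec n p \<mu>)) = qnorm al be (a p) * X\<^sup>2)"
proof -
  define T where "T = (\<lambda>l. qmul al be (qmul al be (\<mu> l) (a l)) (qconj (\<mu> l)))"
  have hf_eq: "hf al be n a (tail_vec n p \<mu>) (tail_vec n p \<mu>) = a p + sum T {Suc p..n}"
    unfolding T_def by (rule hf_tail_vec[OF p])
  have "val_ge v (qnorm al be (T l)) (v (qnorm al be (a p)) + M)" if "l \<in> {Suc p..n}" for l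
  proof -
    have "val_ge v (qnorm al be (\<mu> l)) 0" "val_ge v (qnorm al be (a l)) (v (qnorm al be (a p)) + M)"
      using tail that by (simp_all add: OD_iff_val_ge)
    from val_ge_mult[OF val_ge_mult[OF this] this(1)] show ?thesis
      by (simp add: T_def qnorm_mult qnorm_conj)
  qed
  then have "val_ge v (qnorm al be (sum T {Suc p..n})) (v (qnorm al be (a p)) + M)"
    by (intro val_ge_qnorm_sum) simp_all
  then obtain X where X: "X \<noteq> 0" "v X = 0"
    "qnorm al be (a p + sum T {Suc p..n}) = qnorm al be (a p) * X\<^sup>2"
    using qnorm_add_unit_square[OF ap(1) _ M] by blast
  have "fst (T l) = 0" if "l \<in> {Suc p..n}" for l
    using tail that pure_quat_conj_sandwich[of "a l" al be "\<mu> l"] by (simp add: T_def pure_quat_def)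
  then have "fst (sum T {Suc p..n}) = 0" by (simp add: fst_sum)
  then have "pure_quat (a p + sum T {Suc p..n})" using ap(2) by (simp add: pure_quat_def)
  then show ?thesis using X unfolding hf_eq by blast
qed

lemma hf_adapted_basis_diag:
  assumes a: "\<forall>i\<in>{1..n}. pure_quat (a i) \<and> a i \<noteq> 0" and "1 \<le> m" "m + t \<le> n"
    and tail: "\<forall>l. m + t < l \<and> l \<le> n \<longrightarrow> \<mu> l \<in> OD al be v \<and>
      val_ge v (qnorm al be (a l)) (v (qnorm al be (a (m + t))) + M)"
    and M: "2 * v 4 < M" and i: "i \<in> {1..t+1}"
  defines "b \<equiv> hf al be n a (adapted_basis n m t \<mu> i) (adapted_basis n m t \<mu> i)"
  shows "pure_quat b \<and> b \<noteq> 0 \<and> vD al be v b = vD al be v (a (m + i - 1)) \<and>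
    (\<exists>X. X \<noteq> 0 \<and> qnorm al be b = qnorm al be (a (m + i - 1)) * X\<^sup>2)"
proof -
  have j: "m + i - 1 \<in> {1..n}" using assms(2,3) i by auto
  obtain X where X: "X \<noteq> 0" "v X = 0" "pure_quat b" "qnorm al be b = qnorm al be (a (m + i - 1)) * X\<^sup>2"
  proof (cases "i \<le> t")
    case True
    then have "b = a (m + i - 1)" using j by (simp add: b_def adapted_basis_def hf_unitv)
    then show thesis using that[of 1] a j by simp
  next
    case False
    then have i': "i = t + 1" using i by simp
    then have b: "b = hf al be n a (tail_vec n (m + t) \<mu>) (tail_vec n (m + t) \<mu>)"
      by (simp add: b_def adapted_basis_def)
    have p: "m + t \<in> {1..n}" using assms(2,3) by simp
    have "\<forall>l\<in>{Suc (m + t)..n}. pure_quat (a l) \<and> \<mu> l \<in> OD al be v \<and>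
        val_ge v (qnorm al be (a l)) (v (qnorm al be (a (m + t))) + M)"
      using a tail by fastforce
    from hf_tail_vec_unit_square[OF p _ _ this M] a p
    obtain X where "X \<noteq> 0" "v X = 0" "pure_quat b" "qnorm al be b = qnorm al be (a (m + t)) * X\<^sup>2"
      unfolding b by blast
    then show thesis using that i' by simp
  qed
  have "qnorm al be (a (m + i - 1)) \<noteq> 0" using a j by simp
  then have Nb: "qnorm al be b \<noteq> 0" and vD_b: "vD al be v b = vD al be v (a (m + i - 1))"
    using X by (simp_all add: vD_def v_mult v_power2)
  from Nb have "b \<noteq> 0" by (metis qnorm_zero)
  with X vD_b show ?thesis by blast
qed


lemma hf_adapted_basis_norm_class:
  assumes a: "\<forall>i\<in>{1..n}. pure_quat (a i) \<and> a i \<noteq> 0" and "1 \<le> m" "m + t \<le> n"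
    and tail: "\<forall>l. m + t < l \<and> l \<le> n \<longrightarrow> \<mu> l \<in> OD al be v \<and>
      val_ge v (qnorm al be (a l)) (v (qnorm al be (a (m + t))) + M)"
    and M: "2 * v 4 < M" and i: "i \<in> {1..t+1}"
    and norm_class: "\<forall>j\<in>{2..n}. \<exists>c. c \<noteq> 0 \<and> qnorm al be (a j) = qnorm al be (a 1) * c\<^sup>2"
  shows "\<exists>c. c \<noteq> 0 \<and>
    qnorm al be (hf al be n a (adapted_basis n m t \<mu> i) (adapted_basis n m t \<mu> i)) = qnorm al be (a 1) * c\<^sup>2"
proof -
  obtain X where X: "X \<noteq> 0" "qnorm al be (hf al be n a (adapted_basis n m t \<mu> i) (adapted_basis n m t \<mu> i))
      = qnorm al be (a (m + i - 1)) * X\<^sup>2"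
    using hf_adapted_basis_diag[OF assms(1-6)] by blast
  have "\<exists>c. c \<noteq> 0 \<and> qnorm al be (a (m + i - 1)) = qnorm al be (a 1) * c\<^sup>2"
  proof (cases "m + i - 1 = 1")
    case False
    then have "m + i - 1 \<in> {2..n}" using i assms(2,3) by auto
    then show ?thesis using norm_class by blast
  qed (auto intro: exI[of _ 1])
  then obtain c where "c \<noteq> 0" "qnorm al be (a (m + i - 1)) = qnorm al be (a 1) * c\<^sup>2"
    by blast
  with X show ?thesis by (intro exI[of _ "c * X"]) (simp add: power_mult_distrib)
qed

end

theorem theorem2:
  fixes v :: "'k::field_char_0 \<Rightarrow> int" and \<alpha> \<beta> :: 'k and n m t :: nat
    and a lam :: "nat \<Rightarrow> 'k quat" and r \<sigma> :: "'k quat" and s :: "nat \<Rightarrow> 'k quat"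
  assumes "dyadic_local_field v"
    and "quat_division \<alpha> \<beta>"
    and "\<forall>i\<in>{1..n}. pure_quat (a i) \<and> a i \<noteq> 0"
    and "\<forall>i\<in>{1..<n}. vD \<alpha> \<beta> v (a i) \<le> vD \<alpha> \<beta> v (a (Suc i))"
    and "mu_list (map (\<lambda>i. vD \<alpha> \<beta> v (a i)) [1..<Suc n]) > vD \<alpha> \<beta> v (qk 4)"
    and "\<forall>i\<in>{2..n}. \<exists>c. c \<noteq> 0 \<and> qnorm \<alpha> \<beta> (a i) = qnorm \<alpha> \<beta> (a 1) * c ^ 2"
    and "1 \<le> m" and "m \<le> n"
    and "r \<in> OD \<alpha> \<beta> v"
    and "\<forall>l\<in>{m+1..n}. lam l \<in> OD \<alpha> \<beta> v"
    and "s = vsmul \<alpha> \<beta> (qk 1 - r) (unitv m) - (\<Sum>l\<in>{m+1..n}. vsmul \<alpha> \<beta> (lam l) (unitv l))"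
    and "\<sigma> = qmul \<alpha> \<beta> (a m) (qk 1 - qconj r)"
    and "absD \<alpha> \<beta> v (qk 1 - qconj r) \<ge> absD \<alpha> \<beta> v (qk 2)"
    and "\<sigma> \<noteq> 0" and "\<sigma> - qconj \<sigma> = hf \<alpha> \<beta> n a s s"
    and "srot \<alpha> \<beta> n a s \<sigma> \<in> Uplus \<alpha> \<beta> n a (lat \<alpha> \<beta> v unitv {1..n})"
    and "1 \<le> t" and "t \<le> n - m"
    and "\<forall>l\<in>{1..n-m-t}. absD \<alpha> \<beta> v (lam (m+t)) \<ge> absD \<alpha> \<beta> v (lam (m+t+l))"
  shows "\<exists>S b.
     (\<forall>i\<in>{1..t+1}. S i \<in> Vsp n \<and> pure_quat (b i) \<and> b i \<noteq> 0 \<and> hf \<alpha> \<beta> n a (S i) (S i) = b i) \<and>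
     (\<forall>i\<in>{1..t+1}. \<forall>j\<in>{1..t+1}. i \<noteq> j \<longrightarrow> hf \<alpha> \<beta> n a (S i) (S j) = 0) \<and>
     lat \<alpha> \<beta> v S {1..t+1} \<subseteq> lat \<alpha> \<beta> v unitv {1..n} \<and>
     srot \<alpha> \<beta> n a s \<sigma> \<in> Uplus \<alpha> \<beta> n a (lat \<alpha> \<beta> v S {1..t+1}) \<and>
     mu_list (map (\<lambda>i. vD \<alpha> \<beta> v (b i)) [1..<t+2])
       \<ge> mu_list (map (\<lambda>i. vD \<alpha> \<beta> v (a i)) [1..<Suc n]) \<and>
     (\<forall>i\<in>{1..t+1}. \<exists>c. c \<noteq> 0 \<and> qnorm \<alpha> \<beta> (b i) = qnorm \<alpha> \<beta> (a 1) * c ^ 2)"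
proof -
  interpret quat_valuation v \<alpha> \<beta>
    using assms(1,2) by (simp add: quat_valuation_def dyadic_valuation_def quat_valuation_axioms_def)
  define p where "p = m + t"
  define g where "g = (\<lambda>i. vD \<alpha> \<beta> v (a i))"
  define \<mu> where "\<mu> = (\<lambda>l. qmul \<alpha> \<beta> (qinv \<alpha> \<beta> (lam p)) (lam l))"
  define S where "S = adapted_basis n m t \<mu>"
  define b where "b = (\<lambda>i. hf \<alpha> \<beta> n a (S i) (S i))"
  have p: "1 \<le> m" "m < p" "p \<le> n" "m + t \<le> n" using assms(7,17,18) by (auto simp: p_def)
  have M: "2 * v 4 < mu_list (map g [1..<Suc n])"
    using assms(5) by (simp add: g_def vD_def qnorm_qk v_sixteen[symmetric])
  have gap: "val_ge v (qnorm \<alpha> \<beta> (a l)) (v (qnorm \<alpha> \<beta> (a p)) + mu_list (map g [1..<Suc n]))"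
    if "p < l" "l \<le> n" for l
    using mu_list_le_diff[of n g p l] assms(4) M v_four_pos that p by (simp add: g_def vD_def val_ge_def)
  have lam_le: "absD \<alpha> \<beta> v (lam l) \<le> absD \<alpha> \<beta> v (lam p)" if "p < l" "l \<le> n" for l
  proof -
    have "l - p \<in> {1..n-m-t}" using that by (auto simp: p_def)
    with assms(19) have "absD \<alpha> \<beta> v (lam (m + t + (l - p))) \<le> absD \<alpha> \<beta> v (lam (m + t))" by blast
    then show ?thesis using that by (simp add: p_def)
  qed
  have \<mu>_OD: "\<mu> l \<in> OD \<alpha> \<beta> v" if "p < l" "l \<le> n" for l
    using qinv_mult_OD[OF lam_le[OF that]] by (simp add: \<mu>_def)
  have b_diag: "pure_quat (b i) \<and> b i \<noteq> 0 \<and> vD \<alpha> \<beta> v (b i) = g (m + i - 1)"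
    if "i \<in> {1..t+1}" for i
    using hf_adapted_basis_diag[OF assms(3) p(1,4) _ M that] gap \<mu>_OD
    by (simp add: b_def S_def g_def p_def)
  have lat_S: "lat \<alpha> \<beta> v S {1..t+1} = lat \<alpha> \<beta> v unitv {1..n} \<inter> adapted_subspace \<alpha> \<beta> n m p \<mu>"
    unfolding S_def p_def by (rule lat_adapted_basis) (use p \<mu>_OD in \<open>auto simp: p_def\<close>)
  have "s \<in> adapted_subspace \<alpha> \<beta> n m p \<mu>"
    unfolding assms(11) using p qmul_qinv_mult_cancel[OF lam_le]
    by (intro rotation_vector_in_adapted_subspace) (auto simp: \<mu>_def)
  then have rot: "srot \<alpha> \<beta> n a s \<sigma> \<in> Uplus \<alpha> \<beta> n a (lat \<alpha> \<beta> v S {1..t+1})"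
    unfolding lat_S using assms(16) adapted_subspace_add adapted_subspace_vsmul
    by (intro srot_Uplus_inter)
  have vD_b: "map (\<lambda>i. vD \<alpha> \<beta> v (b i)) [1..<t+2] = map (\<lambda>i. g (m + i - 1)) [1..<t+2]"
    using b_diag by (intro map_cong) auto
  have mu: "mu_list (map g [1..<Suc n]) \<le> mu_list (map (\<lambda>i. vD \<alpha> \<beta> v (b i)) [1..<t+2])"
    unfolding vD_b by (rule mu_list_window_ge) (use assms(4,17) p in \<open>simp_all add: g_def\<close>)
  have square_class: "\<forall>i\<in>{1..t+1}. \<exists>c. c \<noteq> 0 \<and> qnorm \<alpha> \<beta> (b i) = qnorm \<alpha> \<beta> (a 1) * c ^ 2"
    using hf_adapted_basis_norm_class[OF assms(3) p(1,4) _ M _ assms(6)] gap \<mu>_OD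
    by (simp add: b_def S_def p_def)
  show ?thesis
  proof (intro exI[of _ S] exI[of _ b] conjI)
    show "\<forall>i\<in>{1..t+1}. S i \<in> Vsp n \<and> pure_quat (b i) \<and> b i \<noteq> 0 \<and> hf \<alpha> \<beta> n a (S i) (S i) = b i"
      using b_diag adapted_basis_in_Vsp[OF p(1,4)] unfolding S_def b_def by blast
    show "\<forall>i\<in>{1..t+1}. \<forall>j\<in>{1..t+1}. i \<noteq> j \<longrightarrow> hf \<alpha> \<beta> n a (S i) (S j) = 0"
      using hf_adapted_basis_orthogonal[OF p(1)] unfolding S_def by blast
    show "lat \<alpha> \<beta> v S {1..t+1} \<subseteq> lat \<alpha> \<beta> v unitv {1..n}"
      unfolding lat_S by blast
    show "srot \<alpha> \<beta> n a s \<sigma> \<in> Uplus \<alpha> \<beta> n a (lat \<alpha> \<beta> v S {1..t+1})" by (fact rot)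
    show "mu_list (map (\<lambda>i. vD \<alpha> \<beta> v (b i)) [1..<t+2])
      \<ge> mu_list (map (\<lambda>i. vD \<alpha> \<beta> v (a i)) [1..<Suc n])"
      using mu unfolding g_def .
  qed (fact square_class)
qed

end
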